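(* Let $a,b,l$ be positive integers, $\alpha\in(0,1)$, $\delta\ge0$, $\epsilon\ge0$, and $G:\mathbb{R}^k\to\mathbb{R}^n$. If $A\in\mathbb{R}^{m\times n}$ satisfies S-REC$(S_{(a+b)l/2,G'},\,1-\alpha,\,\delta)$ and RIP$(bl,\alpha)$, then for every $\eta\in T_A(\epsilon)$, $$\|\eta\|_2\le(bl)^{-1/2}(C_0+1)\,\sigma_{al,G'}(\eta)+C_1\epsilon+\delta',$$ where $C_0=(1-\alpha)^{-1}(1+\alpha)$, $C_1=(1-\alpha)^{-1}$, $\delta'=\delta(1-\alpha)^{-1}$.
   Context: For $v\in\mathbb{R}^n$ and $s\ge0$, $S_s(v)=\{x\in\mathbb{R}^n:\|x-v\|_0\le s\}$ ($\|\cdot\|_0$ counts nonzero coordinates), and $S_s=S_s(0)$. The difference function is $G'(z_1,z_2)=G(z_1)-G(z_2)$, and $S_{s,G'}=\{G(z_1)-G(z_2)+\nu: z_1,z_2\in\mathbb{R}^k,\ \nu\in S_s\}$; $\sigma_{s,G'}(x)=\inf_{\hat x\in S_{s,G'}}\|x-\hat x\|_1$. $T_A(\epsilon)=\{w\in\mathbb{R}^n:\|Aw\|_2\le\epsilon\}$. A matrix $A$ satisfies RIP$(s,\alpha)$ if $(1-\alpha)\|x\|_2\le\|Ax\|_2\le(1+\alpha)\|x\|_2$ for all $x\in S_s$. For $S\subseteq\mathbb{R}^n$, $\gamma>0$, $\delta\ge0$, $A$ satisfies S-REC$(S,\gamma,\delta)$ if $\|A(x_1-x_2)\|_2\ge\gamma\|x_1-x_2\|_2-\delta$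 for all $x_1,x_2\in S$. *)

theory Defs
  imports "HOL-Analysis.Analysis"
begin

definition l0norm :: "real ^ 'n \<Rightarrow> nat" where
  "l0norm x = card {i. x $ i \<noteq> 0}"

definition l1norm :: "real ^ 'n \<Rightarrow> real" where
  "l1norm x = (\<Sum>i\<in>UNIV. \<bar>x $ i\<bar>)"

definition sparse_around :: "real \<Rightarrow> real ^ 'n \<Rightarrow> (real ^ 'n) set" where
  "sparse_around s v = {x. real (l0norm (x - v)) \<le> s}"

abbreviation sparse_set :: "real \<Rightarrow> (real ^ 'n) set" where
  "sparse_set s \<equiv> sparse_around s 0"

definition S_diff :: "real \<Rightarrow> (real ^ 'k \<Rightarrow> real ^ 'n) \<Rightarrow> (real ^ 'n) set" where
  "S_diff s G = {G z1 - G z2 + \<nu> | z1 z2 \<nu>. \<nu> \<in> sparse_set s}"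

definition sigma_diff :: "real \<Rightarrow> (real ^ 'k \<Rightarrow> real ^ 'n) \<Rightarrow> real ^ 'n \<Rightarrow> real" where
  "sigma_diff s G x = (INF xh \<in> S_diff s G. l1norm (x - xh))"

definition T_set :: "real ^ 'n ^ 'm \<Rightarrow> real \<Rightarrow> (real ^ 'n) set" where
  "T_set A \<epsilon> = {w. norm (A *v w) \<le> \<epsilon>}"

definition RIP :: "real ^ 'n ^ 'm \<Rightarrow> real \<Rightarrow> real \<Rightarrow> bool" where
  "RIP A s \<alpha> \<longleftrightarrow> (\<forall>x \<in> sparse_set s.
      (1 - \<alpha>) * norm x \<le> norm (A *v x) \<and> norm (A *v x) \<le> (1 + \<alpha>) * norm x)"

definition SREC :: "real ^ 'n ^ 'm \<Rightarrow> (real ^ 'n) set \<Rightarrow> real \<Rightarrow> real \<Rightarrow> bool" where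
  "SREC A S \<gamma> \<delta> \<longleftrightarrow> (\<forall>x1 \<in> S. \<forall>x2 \<in> S.
      norm (A *v (x1 - x2)) \<ge> \<gamma> * norm (x1 - x2) - \<delta>)"

end

theory Submission
  imports Defs
begin

text \<open>Fix \<open>\<hat>x = G z\<^sub>1 - G z\<^sub>2 + \<nu>\<close> and \<open>h = \<eta> - \<hat>x\<close>, and let \<open>T\<close> hold the \<open>bl - 1\<close> largest
  entries of \<open>h\<close>. Cutting the tail \<open>r\<close> of \<open>h\<close> outside \<open>T\<close> into consecutive blocks of \<open>bl\<close>
  entries, RIP and the triangle inequality bound both \<open>\<parallel>A r\<parallel>\<close> and \<open>\<parallel>r\<parallel>\<close> by
  \<open>\<parallel>h\<parallel>\<^sub>1 / \<surd>(bl)\<close> (up to the factor \<open>1 + \<alpha>\<close>). The remaining part \<open>\<eta> - r = \<hat>x + h\<^sub>T\<close> has the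
  sparse part \<open>\<nu> + h\<^sub>T\<close> with fewer than \<open>(a+b)l\<close> nonzero entries, so it is a difference
  of two points of \<open>S\<^bsub>(a+b)l/2,G'\<^esub>\<close>, and S-REC bounds its norm by \<open>\<parallel>A(\<eta> - r)\<parallel> \<le> \<epsilon> + \<parallel>A r\<parallel>\<close>. Taking the infimum over \<open>\<hat>x\<close> gives the claim.\<close>

definition linfnorm :: "real ^ 'n \<Rightarrow> real" where
  "linfnorm x = (MAX i. \<bar>x $ i\<bar>)"

definition vec_restrict :: "'n set \<Rightarrow> real ^ 'n \<Rightarrow> real ^ 'n" where
  "vec_restrict B x = (\<chi> i. if i \<in> B then x $ i else 0)"

lemma vec_restrict_nth [simp]: "vec_restrict B x $ i = (if i \<in> B then x $ i else 0)"
  by (simp add: vec_restrict_def)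

lemma vec_restrict_add_Compl: "vec_restrict B x + vec_restrict (- B) x = x"
  by (simp add: vec_eq_iff)

lemma l1norm_nonneg: "0 \<le> l1norm x"
  unfolding l1norm_def by (simp add: sum_nonneg)

lemma l1norm_vec_restrict: "l1norm (vec_restrict B x) = (\<Sum>i\<in>B. \<bar>x $ i\<bar>)"
proof -
  have "l1norm (vec_restrict B x) = (\<Sum>i\<in>UNIV. if i \<in> B then \<bar>x $ i\<bar> else 0)"
    unfolding l1norm_def by (intro sum.cong) auto
  also have "\<dots> = (\<Sum>i\<in>B. \<bar>x $ i\<bar>)"
    by (simp add: sum.If_cases)
  finally show ?thesis .
qed

lemma l1norm_vec_restrict_add_Compl:
  "l1norm (vec_restrict B x) + l1norm (vec_restrict (- B) x) = l1norm x"
  unfolding l1norm_def by (subst sum.distrib[symmetric]) (intro sum.cong, auto)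

lemma abs_nth_le_linfnorm: "\<bar>x $ i\<bar> \<le> linfnorm x"
  unfolding linfnorm_def by (rule Max_ge) auto

lemma linfnorm_nonneg: "0 \<le> linfnorm x"
  using abs_nth_le_linfnorm[of x] by (rule order_trans[OF abs_ge_zero])

lemma linfnorm_le_iff: "linfnorm x \<le> c \<longleftrightarrow> (\<forall>i. \<bar>x $ i\<bar> \<le> c)"
  unfolding linfnorm_def by (subst Max_le_iff) auto

lemma linfnorm_attained: obtains i where "\<bar>x $ i\<bar> = linfnorm x"
proof -
  have "linfnorm x \<in> range (\<lambda>i. \<bar>x $ i\<bar>)"
    unfolding linfnorm_def by (rule Max_in) auto
  then show ?thesis using that by auto
qed

lemma linfnorm_le_l1norm: "linfnorm x \<le> l1norm x"
proof -
  obtain i where "\<bar>x $ i\<bar> = linfnorm x" by (rule linfnorm_attained)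
  moreover have "\<bar>x $ i\<bar> \<le> l1norm x"
    unfolding l1norm_def by (rule member_le_sum) auto
  ultimately show ?thesis by simp
qed

lemma linfnorm_vec_restrict_le: "linfnorm (vec_restrict B x) \<le> linfnorm x"
  unfolding linfnorm_le_iff by (simp add: abs_nth_le_linfnorm linfnorm_nonneg)

lemma l0norm_add_le: "l0norm (x + y) \<le> l0norm x + l0norm y"
proof -
  have "l0norm (x + y) \<le> card ({i. x $ i \<noteq> 0} \<union> {i. y $ i \<noteq> 0})"
    unfolding l0norm_def by (intro card_mono) auto
  also have "\<dots> \<le> l0norm x + l0norm y"
    unfolding l0norm_def by (rule card_Un_le)
  finally show ?thesis .
qed

lemma l0norm_vec_restrict_le: "l0norm (vec_restrict B x) \<le> card B"
  unfolding l0norm_def by (intro card_mono) auto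

lemma norm_le_sqrt_l0norm_linfnorm: "norm x \<le> sqrt (l0norm x) * linfnorm x"
proof -
  let ?S = "{i. x $ i \<noteq> 0}"
  have "(\<Sum>i\<in>UNIV. (x $ i)\<^sup>2) = (\<Sum>i\<in>?S. (x $ i)\<^sup>2)"
    by (rule sum.mono_neutral_right) auto
  also have "\<dots> \<le> (\<Sum>i\<in>?S. (linfnorm x)\<^sup>2)"
  proof (rule sum_mono)
    fix i
    show "(x $ i)\<^sup>2 \<le> (linfnorm x)\<^sup>2"
      using abs_nth_le_linfnorm[of x i] by (metis abs_ge_zero power2_abs power_mono)
  qed
  also have "\<dots> = l0norm x * (linfnorm x)\<^sup>2"
    by (simp add: l0norm_def)
  finally have "norm x \<le> sqrt (l0norm x * (linfnorm x)\<^sup>2)"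
    by (simp add: norm_vec_def L2_set_def)
  also have "\<dots> = sqrt (l0norm x) * linfnorm x"
    using linfnorm_nonneg[of x] by (simp add: real_sqrt_mult)
  finally show ?thesis .
qed

lemma obtain_largest_coords:
  fixes x :: "real ^ 'n"
  assumes "k \<le> CARD('n)"
  obtains B where "card B = k" "\<And>i j. i \<in> B \<Longrightarrow> j \<notin> B \<Longrightarrow> \<bar>x $ j\<bar> \<le> \<bar>x $ i\<bar>"
proof -
  have "\<exists>B. card B = k \<and> (\<forall>i\<in>B. \<forall>j. j \<notin> B \<longrightarrow> \<bar>x $ j\<bar> \<le> \<bar>x $ i\<bar>)"
    using assms
  proof (induction k)
    case 0
    show ?case by (intro exI[of _ "{}"]) auto
  next
    case (Suc k)
    then obtain B where B: "card B = k" "\<forall>i\<in>B. \<forall>j. j \<notin> B \<longrightarrow> \<bar>x $ j\<bar> \<le> \<bar>x $ i\<bar>"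
      by auto
    have "B \<noteq> UNIV"
      using B(1) Suc.prems by auto
    then have "- B \<noteq> {}"
      by auto
    then have "Max ((\<lambda>j. \<bar>x $ j\<bar>) ` (- B)) \<in> (\<lambda>j. \<bar>x $ j\<bar>) ` (- B)"
      by (intro Max_in) auto
    then obtain j0 where j0: "j0 \<notin> B" "\<bar>x $ j0\<bar> = Max ((\<lambda>j. \<bar>x $ j\<bar>) ` (- B))"
      by auto
    have "\<bar>x $ j\<bar> \<le> \<bar>x $ j0\<bar>" if "j \<notin> B" for j
      unfolding j0(2) using that by (intro Max_ge) auto
    then show ?case
      using B j0(1) by (intro exI[of _ "insert j0 B"]) auto
  qed
  then show ?thesis using that by blast
qed

text \<open>Peel off the \<open>N\<close> largest entries at a time: the first block costs \<open>\<surd>N \<parallel>v\<parallel>\<^sub>\<infinity>\<close>, and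
  every later block has entries no larger than the average of the preceding block.\<close>
lemma subadditive_le_blocks:
  fixes F :: "real ^ 'n \<Rightarrow> real" and N :: nat and K :: real
  assumes subadd: "\<And>x y. F (x + y) \<le> F x + F y"
    and sparse: "\<And>x. l0norm x \<le> N \<Longrightarrow> F x \<le> K * norm x"
    and "0 \<le> K" "0 < N"
  shows "F v \<le> K / sqrt N * (real (N - 1) * linfnorm v + l1norm v)"
proof (induction "l0norm v" arbitrary: v rule: less_induct)
  case less
  let ?m = "linfnorm v" and ?c = "K / sqrt N"
  have c_nonneg: "0 \<le> ?c"
    using \<open>0 \<le> K\<close> by simp
  have head: "F x \<le> ?c * (N * linfnorm x)" if "l0norm x \<le> N" for x
  proof -
    have "norm x \<le> sqrt N * linfnorm x"
      using norm_le_sqrt_l0norm_linfnorm[of x] that linfnorm_nonneg[of x]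
      by (meson mult_right_mono of_nat_le_iff order_trans real_sqrt_le_iff)
    then have "F x \<le> K * (sqrt N * linfnorm x)"
      using sparse[OF that] \<open>0 \<le> K\<close> by (meson mult_left_mono order_trans)
    also have "\<dots> = ?c * (N * linfnorm x)"
      using \<open>0 < N\<close> by (simp add: field_simps flip: real_sqrt_mult_self[of N])
    finally show ?thesis .
  qed
  have N_split: "real N * ?m = real (N - 1) * ?m + ?m"
    using \<open>0 < N\<close> by (simp add: of_nat_diff algebra_simps)
  show ?case
  proof (cases "l0norm v \<le> N")
    case True
    have "F v \<le> ?c * (real (N - 1) * ?m + ?m)"
      using head[OF True] N_split by simp
    also have "\<dots> \<le> ?c * (real (N - 1) * ?m + l1norm v)"
      using linfnorm_le_l1norm c_nonneg by (intro mult_left_mono) auto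
    finally show ?thesis .
  next
    case False
    have "N \<le> CARD('n)"
      using False card_mono[of UNIV "{i. v $ i \<noteq> 0}"] by (simp add: l0norm_def)
    then obtain B where B: "card B = N" "\<And>i j. i \<in> B \<Longrightarrow> j \<notin> B \<Longrightarrow> \<bar>v $ j\<bar> \<le> \<bar>v $ i\<bar>"
      using obtain_largest_coords by metis
    obtain i1 where i1: "i1 \<in> B" "\<bar>v $ i1\<bar> = ?m"
    proof -
      obtain i0 where i0: "\<bar>v $ i0\<bar> = ?m"
        by (rule linfnorm_attained)
      obtain i where "i \<in> B"
        using B(1) \<open>0 < N\<close> by fastforce
      then show ?thesis
        using that i0 B(2)[of i i0] abs_nth_le_linfnorm[of v i] by (cases "i0 \<in> B") auto
    qed
    define tail where "tail = vec_restrict (- B) v"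
    obtain j where "v $ j \<noteq> 0"
      using False by (fastforce simp: l0norm_def)
    then have "v $ i1 \<noteq> 0"
      using i1(2) abs_nth_le_linfnorm[of v j] by auto
    then have "{i. tail $ i \<noteq> 0} \<subset> {i. v $ i \<noteq> 0}"
      using i1(1) unfolding tail_def by auto
    then have tail_smaller: "l0norm tail < l0norm v"
      unfolding l0norm_def by (intro psubset_card_mono) auto
    have "linfnorm tail \<le> \<bar>v $ i\<bar>" if "i \<in> B" for i
      unfolding linfnorm_le_iff tail_def using B(2)[OF that] by simp
    then have "real (card (B - {i1})) * linfnorm tail \<le> (\<Sum>i\<in>B - {i1}. \<bar>v $ i\<bar>)"
      by (intro sum_bounded_below) auto
    also have "\<dots> = l1norm (vec_restrict B v) - ?m"
      using i1 by (simp add: l1norm_vec_restrict sum_diff1)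
    finally have tail_linfnorm: "real (N - 1) * linfnorm tail \<le> l1norm (vec_restrict B v) - ?m"
      using B(1) i1(1) by simp
    have "F v \<le> F (vec_restrict B v) + F tail"
      using subadd vec_restrict_add_Compl[of B v] unfolding tail_def by metis
    also have "\<dots> \<le> ?c * (N * ?m) + ?c * (real (N - 1) * linfnorm tail + l1norm tail)"
    proof (rule add_mono)
      have "F (vec_restrict B v) \<le> ?c * (N * linfnorm (vec_restrict B v))"
        using head l0norm_vec_restrict_le B(1) by metis
      also have "\<dots> \<le> ?c * (N * ?m)"
        using c_nonneg linfnorm_vec_restrict_le by (intro mult_left_mono) auto
      finally show "F (vec_restrict B v) \<le> ?c * (N * ?m)" .
    qed (rule less.hyps[OF tail_smaller])
    also have "\<dots> = ?c * (N * ?m + real (N - 1) * linfnorm tail + l1norm tail)"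
      by (simp add: algebra_simps)
    also have "\<dots> \<le> ?c * (real (N - 1) * ?m + l1norm v)"
      using tail_linfnorm N_split l1norm_vec_restrict_add_Compl[of B v]
      unfolding tail_def by (intro mult_left_mono[OF _ c_nonneg]) linarith
    finally show ?thesis .
  qed
qed

lemma obtain_head_coords:
  fixes h :: "real ^ 'n"
  assumes "0 < N"
  obtains T where "card T < N"
    "real (N - 1) * linfnorm (vec_restrict (- T) h) \<le> l1norm (vec_restrict T h)"
proof (cases "N - 1 \<le> CARD('n)")
  case True
  then obtain T where T: "card T = N - 1" "\<And>i j. i \<in> T \<Longrightarrow> j \<notin> T \<Longrightarrow> \<bar>h $ j\<bar> \<le> \<bar>h $ i\<bar>"
    using obtain_largest_coords by metis
  have "linfnorm (vec_restrict (- T) h) \<le> \<bar>h $ i\<bar>" if "i \<in> T" for i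
    unfolding linfnorm_le_iff using T(2)[OF that] by simp
  then have "real (card T) * linfnorm (vec_restrict (- T) h) \<le> (\<Sum>i\<in>T. \<bar>h $ i\<bar>)"
    by (intro sum_bounded_below) auto
  then show ?thesis
    by (intro that[of T]) (use T(1) \<open>0 < N\<close> in \<open>auto simp: l1norm_vec_restrict\<close>)
next
  case False
  have "linfnorm (vec_restrict (- UNIV) h) \<le> 0"
    unfolding linfnorm_le_iff by simp
  then have "real (N - 1) * linfnorm (vec_restrict (- UNIV) h) \<le> 0"
    by (simp add: mult_nonneg_nonpos)
  then show ?thesis
    by (intro that[of UNIV]) (use False l1norm_nonneg in \<open>auto intro: order_trans\<close>)
qed

lemma subadditive_le_tail:
  fixes F :: "real ^ 'n \<Rightarrow> real" and N :: nat and K :: real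
  assumes "\<And>x y. F (x + y) \<le> F x + F y"
    and "\<And>x. l0norm x \<le> N \<Longrightarrow> F x \<le> K * norm x"
    and "0 \<le> K" "0 < N"
    and head: "real (N - 1) * linfnorm (vec_restrict (- T) h) \<le> l1norm (vec_restrict T h)"
  shows "F (vec_restrict (- T) h) \<le> K / sqrt N * l1norm h"
proof -
  let ?tail = "vec_restrict (- T) h"
  have "F ?tail \<le> K / sqrt N * (real (N - 1) * linfnorm ?tail + l1norm ?tail)"
    by (rule subadditive_le_blocks) (use assms in auto)
  also have "\<dots> \<le> K / sqrt N * l1norm h"
    using head l1norm_vec_restrict_add_Compl[of T h] \<open>0 \<le> K\<close>
    by (intro mult_left_mono) auto
  finally show ?thesis .
qed

lemma S_diffI: "real (l0norm \<nu>) \<le> s \<Longrightarrow> G z1 - G z2 + \<nu> \<in> S_diff s G"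
  unfolding S_diff_def sparse_around_def by auto

lemma S_diffE:
  assumes "x \<in> S_diff s G"
  obtains z1 z2 \<nu> where "x = G z1 - G z2 + \<nu>" "real (l0norm \<nu>) \<le> s"
  using assms unfolding S_diff_def sparse_around_def by auto

text \<open>Half of the support goes to each point; \<open>M\<close> must be an integer for the halves to fit.\<close>
lemma S_diff_split_diff:
  fixes G :: "real ^ 'k \<Rightarrow> real ^ 'n"
  assumes "l0norm w < M"
  obtains x1 x2 where "x1 \<in> S_diff (real M / 2) G" "x2 \<in> S_diff (real M / 2) G"
    "G z1 - G z2 + w = x1 - x2"
proof -
  let ?S = "{i. w $ i \<noteq> 0}"
  obtain S1 where S1: "S1 \<subseteq> ?S" "card S1 = card ?S div 2"
    using obtain_subset_with_card_n[of "card ?S div 2" ?S] by auto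
  define w1 where "w1 = vec_restrict S1 w"
  define w2 where "w2 = vec_restrict (- S1) w"
  have "l0norm w1 \<le> card ?S div 2"
    unfolding w1_def using l0norm_vec_restrict_le S1(2) by metis
  then have "real (l0norm w1) \<le> real M / 2"
    using assms by (simp add: l0norm_def)
  then have x1: "G z1 - G z2 + w1 \<in> S_diff (real M / 2) G"
    by (rule S_diffI)
  have "l0norm (- w2) \<le> card (?S - S1)"
    unfolding l0norm_def w2_def by (intro card_mono) auto
  also have "\<dots> = card ?S - card ?S div 2"
    using S1 by (simp add: card_Diff_subset finite_subset)
  finally have "real (l0norm (- w2)) \<le> real M / 2"
    using assms by (simp add: l0norm_def)
  then have x2: "G z2 - G z2 + - w2 \<in> S_diff (real M / 2) G"
    by (rule S_diffI)
  have "G z1 - G z2 + w = (G z1 - G z2 + w1) - (G z2 - G z2 + - w2)"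
    using vec_restrict_add_Compl[of S1 w] unfolding w1_def w2_def by (simp add: algebra_simps)
  then show ?thesis
    using that x1 x2 by blast
qed

lemma norm_le_l1_dist_S_diff:
  fixes s N M :: nat and \<alpha> \<delta> \<epsilon> :: real
    and G :: "real ^ 'k \<Rightarrow> real ^ 'n" and A :: "real ^ 'n ^ 'm"
  assumes "0 < N" "s + N \<le> M" "0 \<le> \<alpha>" "\<alpha> < 1"
    and srec: "SREC A (S_diff (real M / 2) G) (1 - \<alpha>) \<delta>"
    and rip: "RIP A (real N) \<alpha>"
    and A\<eta>: "norm (A *v \<eta>) \<le> \<epsilon>"
    and "xh \<in> S_diff (real s) G"
  shows "norm \<eta> \<le> 1 / sqrt N * ((1 + \<alpha>) / (1 - \<alpha>) + 1) * l1norm (\<eta> - xh)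
           + \<epsilon> / (1 - \<alpha>) + \<delta> / (1 - \<alpha>)"
proof -
  obtain z1 z2 \<nu> where xh: "xh = G z1 - G z2 + \<nu>" "real (l0norm \<nu>) \<le> real s"
    using \<open>xh \<in> S_diff (real s) G\<close> by (rule S_diffE)
  define h where "h = \<eta> - xh"
  obtain T where T: "card T < N"
    "real (N - 1) * linfnorm (vec_restrict (- T) h) \<le> l1norm (vec_restrict T h)"
    using obtain_head_coords[OF \<open>0 < N\<close>] by metis
  define r where "r = vec_restrict (- T) h"
  have A_r: "norm (A *v r) \<le> (1 + \<alpha>) / sqrt N * l1norm h"
    unfolding r_def
  proof (rule subadditive_le_tail[OF _ _ _ \<open>0 < N\<close> T(2)])
    fix x y :: "real ^ 'n"
    show "norm (A *v (x + y)) \<le> norm (A *v x) + norm (A *v y)"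
      by (simp add: matrix_vector_right_distrib norm_triangle_ineq)
  next
    fix x :: "real ^ 'n"
    assume "l0norm x \<le> N"
    then show "norm (A *v x) \<le> (1 + \<alpha>) * norm x"
      using rip by (simp add: RIP_def sparse_around_def)
  qed (use \<open>0 \<le> \<alpha>\<close> in simp)
  have norm_r: "norm r \<le> 1 / sqrt N * l1norm h"
    unfolding r_def
    by (rule subadditive_le_tail[OF _ _ _ \<open>0 < N\<close> T(2)]) (auto intro: norm_triangle_ineq)
  have "l0norm (\<nu> + vec_restrict T h) \<le> s + card T"
    using l0norm_add_le[of \<nu>] l0norm_vec_restrict_le[of T h] xh(2) by (meson add_mono of_nat_le_iff order_trans)
  then have "l0norm (\<nu> + vec_restrict T h) < M"
    using T(1) \<open>s + N \<le> M\<close> by linarith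
  then obtain x1 x2 where x12: "x1 \<in> S_diff (real M / 2) G" "x2 \<in> S_diff (real M / 2) G"
    "G z1 - G z2 + (\<nu> + vec_restrict T h) = x1 - x2"
    by (rule S_diff_split_diff)
  define y where "y = x1 - x2"
  have \<eta>_split: "\<eta> = y + r"
    using vec_restrict_add_Compl[of T h] unfolding y_def r_def x12(3)[symmetric] h_def xh(1)
    by (simp add: algebra_simps)
  have "(1 - \<alpha>) * norm y - \<delta> \<le> norm (A *v y)"
    using srec x12 unfolding SREC_def y_def by blast
  also have "\<dots> \<le> norm (A *v \<eta>) + norm (A *v r)"
    using norm_triangle_ineq4[of "A *v \<eta>" "A *v r"] \<eta>_split
    by (simp add: matrix_vector_right_distrib)
  finally have "(1 - \<alpha>) * norm y \<le> \<epsilon> + \<delta> + (1 + \<alpha>) / sqrt N * l1norm h"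
    using A\<eta> A_r by linarith
  then have norm_y: "norm y \<le> (\<epsilon> + \<delta> + (1 + \<alpha>) / sqrt N * l1norm h) / (1 - \<alpha>)"
    using \<open>\<alpha> < 1\<close> by (simp add: pos_le_divide_eq mult.commute)
  have "norm \<eta> \<le> norm y + norm r"
    unfolding \<eta>_split by (rule norm_triangle_ineq)
  also have "\<dots> \<le> (\<epsilon> + \<delta> + (1 + \<alpha>) / sqrt N * l1norm h) / (1 - \<alpha>) + 1 / sqrt N * l1norm h"
    using norm_y norm_r by linarith
  also have "\<dots> = 1 / sqrt N * ((1 + \<alpha>) / (1 - \<alpha>) + 1) * l1norm h + \<epsilon> / (1 - \<alpha>) + \<delta> / (1 - \<alpha>)"
    by (simp add: add_divide_distrib ring_distribs)
  finally show ?thesis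
    unfolding h_def .
qed

lemma le_sigma_diff:
  assumes "0 \<le> s" "0 < c" "\<And>xh. xh \<in> S_diff s G \<Longrightarrow> t \<le> c * l1norm (x - xh) + E"
  shows "t \<le> c * sigma_diff s G x + E"
proof -
  have "G z - G z + 0 \<in> S_diff s G" for z
    using \<open>0 \<le> s\<close> by (intro S_diffI) (simp add: l0norm_def)
  then have "S_diff s G \<noteq> {}"
    by blast
  moreover have "(t - E) / c \<le> l1norm (x - xh)" if "xh \<in> S_diff s G" for xh
    using assms(3)[OF that] \<open>0 < c\<close> by (simp add: pos_divide_le_eq mult.commute)
  ultimately have "(t - E) / c \<le> sigma_diff s G x"
    unfolding sigma_diff_def by (rule cINF_greatest)
  then show ?thesis
    using \<open>0 < c\<close> by (simp add: divide_le_eq mult.commute)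
qed

theorem lemma4:
  fixes a b l :: nat and \<alpha> \<delta> \<epsilon> :: real
    and G :: "real ^ 'k \<Rightarrow> real ^ 'n" and A :: "real ^ 'n ^ 'm"
  assumes "a > 0" "b > 0" "l > 0"
    and "0 < \<alpha>" "\<alpha> < 1" "\<delta> \<ge> 0" "\<epsilon> \<ge> 0"
    and "SREC A (S_diff (real ((a + b) * l) / 2) G) (1 - \<alpha>) \<delta>"
    and "RIP A (real (b * l)) \<alpha>"
    and "\<eta> \<in> T_set A \<epsilon>"
  shows "norm \<eta> \<le> (1 / sqrt (real (b * l))) * ((1 + \<alpha>) / (1 - \<alpha>) + 1) * sigma_diff (real (a * l)) G \<eta>
         + (1 / (1 - \<alpha>)) * \<epsilon> + \<delta> / (1 - \<alpha>)"
proof -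
  have "0 < b * l"
    using assms(2,3) by simp
  have "a * l + b * l \<le> (a + b) * l"
    by (simp add: add_mult_distrib)
  have "norm (A *v \<eta>) \<le> \<epsilon>"
    using assms(10) by (simp add: T_set_def)
  have "norm \<eta> \<le> (1 / sqrt (real (b * l))) * ((1 + \<alpha>) / (1 - \<alpha>) + 1) * l1norm (\<eta> - xh)
          + (\<epsilon> / (1 - \<alpha>) + \<delta> / (1 - \<alpha>))"
    if "xh \<in> S_diff (real (a * l)) G" for xh
    using norm_le_l1_dist_S_diff[where s = "a * l" and N = "b * l" and M = "(a + b) * l",
        OF \<open>0 < b * l\<close> \<open>a * l + b * l \<le> (a + b) * l\<close> _ \<open>\<alpha> < 1\<close> assms(8,9)
        \<open>norm (A *v \<eta>) \<le> \<epsilon>\<close> that] \<open>0 < \<alpha>\<close>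
    by (simp add: add.assoc)
  then have "norm \<eta> \<le> (1 / sqrt (real (b * l))) * ((1 + \<alpha>) / (1 - \<alpha>) + 1) * sigma_diff (real (a * l)) G \<eta>
          + (\<epsilon> / (1 - \<alpha>) + \<delta> / (1 - \<alpha>))"
    using \<open>0 < b * l\<close> assms(4,5) by (intro le_sigma_diff) (auto intro!: divide_pos_pos add_pos_pos)
  then show ?thesis
    by simp
qed

end
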